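(* For every integer $a\ge1$, $\phi(p_{a,0})=(t-1)^a-(-1)^a$.
   Context: $p_{a,b}=\sum_{i\in\mathbb{Z}}x_i^ax_{-i}^b$ in commuting variables $x_i$, $i\in\mathbb{Z}$. A signed graph is a finite graph (loops and multiple edges allowed) with $\mathrm{sgn}:E\to\{+,-\}$; a coloring $\kappa:V\to\mathbb{Z}$ is proper if $\kappa(u)\ne\mathrm{sgn}(e)\kappa(v)$ for every edge $e$ with endpoints $u,v$. An orientation assigns to each half-edge (a loop has two) an arrow toward or away from the vertex, such that on a positive edge exactly one of the two arrows points toward its vertex and on a negative edge both point toward or both point away. A cycle is a closed walk in which, considering only the edges of the walk, every vertex of the walk has at least one arrow pointing into it and one pointing out of it; an orientation is acyclic if it has no cycle; a sink is a vertex all of whose incident arrows point toward it (an isolated vertex is a sink). A signed poset is an acyclic orientation $P$ of a signed graph. A proper coloring $\kappa$ preserves $P$ if for every edge $e$ and each endpoint $v$ of $e$, with $u$ the other endpoint ($u=v$ for a loop), the arrow of $P$ at the incidence of $e$ with $v$ points toward $v$ iff $\kappa(v)>\mathrm{sgn}(e)\kappa(u)$. $Y_P=\sum_\kappa\prod_v x_{\kappa(v)}$ over proper colorings preserving $P$; $\mathbb{Y}$ is the $\mathbb{Q}$-span of all $Y_P$ (it is closed under products and contains $p_{a,b}$ for $a\ge1,b\ge0$ and $x_0$). $\phi:\mathbb{Y}\to\mathbb{Q}[t]$ is the (unique) $\mathbb{Q}$-linear map with $\phi(Y_P)=t^{\mathrm{sink}(P)}$, $\mathrm{sink}(P)$ the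 number of sinks of $P$ (its existence is established in the paper). *)

theory Defs
  imports "HOL-Library.Multiset" "HOL-Library.FuncSet" "HOL-Computational_Algebra.Polynomial"
begin

text \<open>Signed graphs with an orientation (bidirected graphs). Vertices and edges are
  labelled by natural numbers (every finite graph is isomorphic to such a one).
  An edge e has an ordered pair of endpoints ends e = (a,b) (a loop if a = b);
  its two half-edges are the incidence with a (first) and with b (second).
  sgn e = True means positive edge. ori e = (p,q): p says whether the arrow at the
  incidence with the first endpoint points toward it, q likewise for the second.\<close>

record sposet =
  V :: "nat set"
  E :: "nat set"
  ends :: "nat \<Rightarrow> nat \<times> nat"
  sgn :: "nat \<Rightarrow> bool"
  ori :: "nat \<Rightarrow> bool \<times> bool"

definition sgnval :: "sposet \<Rightarrow> nat \<Rightarrow> int" where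
  "sgnval P e = (if sgn P e then 1 else -1)"

definition is_orientation :: "sposet \<Rightarrow> bool" where
  "is_orientation P \<longleftrightarrow> finite (V P) \<and> finite (E P) \<and>
     (\<forall>e\<in>E P. fst (ends P e) \<in> V P \<and> snd (ends P e) \<in> V P) \<and>
     (\<forall>e\<in>E P. (sgn P e \<longrightarrow> fst (ori P e) \<noteq> snd (ori P e)) \<and>
                (\<not> sgn P e \<longrightarrow> fst (ori P e) = snd (ori P e)))"

definition arrow_in :: "sposet \<Rightarrow> nat \<Rightarrow> nat \<Rightarrow> bool" where
  "arrow_in P e w \<longleftrightarrow> (fst (ends P e) = w \<and> fst (ori P e)) \<or> (snd (ends P e) = w \<and> snd (ori P e))"

definition arrow_out :: "sposet \<Rightarrow> nat \<Rightarrow> nat \<Rightarrow> bool" where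
  "arrow_out P e w \<longleftrightarrow> (fst (ends P e) = w \<and> \<not> fst (ori P e)) \<or> (snd (ends P e) = w \<and> \<not> snd (ori P e))"

definition is_cycle :: "sposet \<Rightarrow> nat \<Rightarrow> (nat \<Rightarrow> nat) \<Rightarrow> (nat \<Rightarrow> nat) \<Rightarrow> bool" where
  "is_cycle P n vs es \<longleftrightarrow> n \<ge> 1 \<and> vs n = vs 0 \<and>
     (\<forall>i<n. es i \<in> E P \<and> (ends P (es i) = (vs i, vs (Suc i)) \<or> ends P (es i) = (vs (Suc i), vs i))) \<and>
     (\<forall>w \<in> vs ` {..<n}. (\<exists>e \<in> es ` {..<n}. arrow_in P e w) \<and> (\<exists>e \<in> es ` {..<n}. arrow_out P e w))"

definition signed_poset :: "sposet \<Rightarrow> bool" where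
  "signed_poset P \<longleftrightarrow> is_orientation P \<and> (\<nexists>n vs es. is_cycle P n vs es)"

definition is_sink :: "sposet \<Rightarrow> nat \<Rightarrow> bool" where
  "is_sink P v \<longleftrightarrow> v \<in> V P \<and>
     (\<forall>e\<in>E P. (fst (ends P e) = v \<longrightarrow> fst (ori P e)) \<and> (snd (ends P e) = v \<longrightarrow> snd (ori P e)))"

definition sinks :: "sposet \<Rightarrow> nat" where
  "sinks P = card {v \<in> V P. is_sink P v}"

definition proper_col :: "sposet \<Rightarrow> (nat \<Rightarrow> int) \<Rightarrow> bool" where
  "proper_col P \<kappa> \<longleftrightarrow> (\<forall>e\<in>E P. \<kappa> (fst (ends P e)) \<noteq> sgnval P e * \<kappa> (snd (ends P e)))"

definition preserves :: "sposet \<Rightarrow> (nat \<Rightarrow> int) \<Rightarrow> bool" where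
  "preserves P \<kappa> \<longleftrightarrow> (\<forall>e\<in>E P.
     (fst (ori P e) \<longleftrightarrow> \<kappa> (fst (ends P e)) > sgnval P e * \<kappa> (snd (ends P e))) \<and>
     (snd (ori P e) \<longleftrightarrow> \<kappa> (snd (ends P e)) > sgnval P e * \<kappa> (fst (ends P e))))"

text \<open>Formal power series in commuting variables x_i (i \<in> \<int>), represented by their
  coefficient function on monomials; a monomial is a finite multiset of indices.\<close>
type_synonym fps_Z = "int multiset \<Rightarrow> rat"

text \<open>Y_P = sum over proper colorings preserving P of prod_v x_{kappa v}.\<close>
definition Y :: "sposet \<Rightarrow> fps_Z" where
  "Y P m = of_nat (card {\<kappa> \<in> V P \<rightarrow>\<^sub>E UNIV. proper_col P \<kappa> \<and> preserves P \<kappa> \<and>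
                          image_mset \<kappa> (mset_set (V P)) = m})"

text \<open>p_{a,b} = sum_i x_i^a x_{-i}^b.\<close>
definition p_ab :: "nat \<Rightarrow> nat \<Rightarrow> fps_Z" where
  "p_ab a b m = of_nat (card {i::int. replicate_mset a i + replicate_mset b (- i) = m})"

definition represents :: "(rat \<times> sposet) list \<Rightarrow> fps_Z \<Rightarrow> bool" where
  "represents cs f \<longleftrightarrow> (\<forall>(c, P) \<in> set cs. signed_poset P) \<and>
     (\<forall>m. (\<Sum>(c, P)\<leftarrow>cs. c * Y P m) = f m)"

definition phi_comb :: "(rat \<times> sposet) list \<Rightarrow> rat poly" where
  "phi_comb cs = (\<Sum>(c, P)\<leftarrow>cs. monom c (sinks P))"

end

theory Submission
  imports Defs
begin

(*
  Call a coloring of a signed poset P gapless if the absolute values of its colors fill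
  {1, ..., N}, N being its top level.  Removing the vertices of level +N and -N from a gapless
  preserving coloring leaves a gapless preserving coloring of the induced subposet; the removed
  vertices form a set T of sinks colored N and a disjoint set B of sources colored -N, and
  conversely any such nonempty pair (T, B) can be placed on top of any gapless coloring of the
  rest.  Give a gapless coloring the weight (-1)^(N + |V|).  Placing (T, B) on top multiplies it
  by -(-1)^(|T| + |B|), and the sum of (-1)^(|T| + |B|) over all pairs is -1 as soon as P has an
  edge, because acyclicity then forces a sink that is not a source; without edges the zero
  coloring makes up the difference.  So, by induction on |V|, the weights of all gapless
  colorings sum to 1.  The same recursion shows that a second weight, (t - 1)^(number of
  vertices at level N) times a sign and supported on colorings without a vertex at level -N,
  sums to t^sink(P) - 1.

  Both weights depend only on the multiset of colors of the coloring, that is, on its monomial.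
  Hence f |-> sum_m f(m) w(m) is a linear functional with Y_P |-> t^sink(P), and it computes phi
  of every representation.  For p_{a,0} = sum_i x_i^a only i in {-1, 0, 1} contribute, which
  gives (t - 1)^a - (-1)^a.  That p_{a,0} has a representation at all follows by
  inclusion-exclusion along a path 0 - 1 - ... - (a - 1), using
  [k_i = k_(i+1)] = 1 - [k_i < k_(i+1)] - [k_i > k_(i+1)].
*)

lemma sum_power_card_Pow:
  fixes x :: "'a::comm_semiring_1"
  assumes "finite A"
  shows "(\<Sum>S\<in>Pow A. x ^ card S) = (x + 1) ^ card A"
proof -
  have "(x + 1) ^ card A = (\<Prod>a\<in>A. x + 1)"
    by simp
  also have "\<dots> = (\<Sum>S\<in>Pow A. (\<Prod>a\<in>S. x) * (\<Prod>a\<in>A - S. 1))"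
    by (rule prod_add[OF assms])
  also have "\<dots> = (\<Sum>S\<in>Pow A. x ^ card S)"
    by simp
  finally show ?thesis ..
qed

lemma sum_alternating_supersets:
  assumes "finite B"
  shows "(\<Sum>Y\<in>{Y. Y \<subseteq> B \<and> A \<subseteq> Y}. (- 1 :: 'a::ring_1) ^ card Y) = (if A = B then (- 1) ^ card A else 0)"
proof (cases "A \<subset> B")
  case True
  have "card {Y \<in> {Y. Y \<subseteq> B \<and> A \<subseteq> Y}. even (card Y)} = card {Y \<in> {Y. Y \<subseteq> B \<and> A \<subseteq> Y}. odd (card Y)}"
    using card_subsupersets_even_odd[OF assms True] by (simp add: conj_assoc)
  then show ?thesis
    using sum_alternating_cancels[of "{Y. Y \<subseteq> B \<and> A \<subseteq> Y}" card] True assms by auto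
next
  case False
  then have "{Y. Y \<subseteq> B \<and> A \<subseteq> Y} = (if A = B then {A} else {})"
    by auto
  then show ?thesis
    by simp
qed

lemma sum_alternating_disjoint_pairs:
  assumes "finite A" "finite B"
  shows "(\<Sum>(X, Y)\<in>{(X, Y). X \<subseteq> A \<and> Y \<subseteq> B \<and> X \<inter> Y = {}}. (- 1 :: 'a::comm_ring_1) ^ (card X + card Y)) =
           (if A = B then (- 1) ^ card A else 0)"
proof -
  have "(\<Sum>(X, Y)\<in>{(X, Y). X \<subseteq> A \<and> Y \<subseteq> B \<and> X \<inter> Y = {}}. (- 1 :: 'a) ^ (card X + card Y)) =
        (\<Sum>(Y, X)\<in>Sigma (Pow B) (\<lambda>Y. Pow (A - Y)). (- 1) ^ card Y * (- 1) ^ card X)"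
    by (rule sum.reindex_bij_witness[where i = prod.swap and j = prod.swap]) (auto simp flip: power_add simp: add.commute)
  also have "\<dots> = (\<Sum>Y\<in>Pow B. (- 1) ^ card Y * (\<Sum>X\<in>Pow (A - Y). (- 1) ^ card X))"
    using assms by (simp add: sum.Sigma[symmetric] sum_distrib_left finite_subset)
  also have "\<dots> = (\<Sum>Y\<in>Pow B. if A \<subseteq> Y then (- 1) ^ card Y else 0)"
    using assms(1) by (intro sum.cong) (auto simp: sum_power_card_Pow power_0_left card_eq_0_iff)
  also have "\<dots> = (\<Sum>Y\<in>{Y. Y \<subseteq> B \<and> A \<subseteq> Y}. (- 1) ^ card Y)"
    using assms(2) by (simp add: sum.If_cases Int_def conj_commute)
  finally show ?thesis
    using sum_alternating_supersets[OF assms(2), of A] by simp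
qed

lemma prod_of_bool: "finite I \<Longrightarrow> (\<Prod>i\<in>I. of_bool (Q i) :: 'a::comm_semiring_1) = of_bool (\<forall>i\<in>I. Q i)"
  by (induction I rule: finite_induct) auto

lemma prod_sign: "finite I \<Longrightarrow> (\<Prod>i\<in>I. if P i then 1 else - 1 :: 'a::comm_ring_1) = (- 1) ^ card {i \<in> I. \<not> P i}"
  by (simp add: prod.If_cases Int_def)

lemma image_mset_restrict_const:
  "image_mset (restrict (\<lambda>_. c) A) (mset_set A) = replicate_mset (card A) c"
proof -
  have "image_mset (restrict (\<lambda>_. c) A) (mset_set A) = image_mset (\<lambda>_. c) (mset_set A)"
    by (rule image_mset_cong) (cases "finite A", auto)
  then show ?thesis
    by (simp add: image_mset_const_eq)
qed

lemma smult_sum_right: "smult c (\<Sum>i\<in>S. f i) = (\<Sum>i\<in>S. smult c (f i))"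
  by (induction S rule: infinite_finite_induct) (auto simp: smult_add_right)

section \<open>Sinks, sources and acyclicity\<close>

definition is_source :: "sposet \<Rightarrow> nat \<Rightarrow> bool" where
  "is_source P v \<longleftrightarrow> v \<in> V P \<and>
     (\<forall>e\<in>E P. (fst (ends P e) = v \<longrightarrow> \<not> fst (ori P e)) \<and> (snd (ends P e) = v \<longrightarrow> \<not> snd (ori P e)))"

definition sink_set :: "sposet \<Rightarrow> nat set" where
  "sink_set P = {v \<in> V P. is_sink P v}"

definition source_set :: "sposet \<Rightarrow> nat set" where
  "source_set P = {v \<in> V P. is_source P v}"

definition induced :: "sposet \<Rightarrow> nat set \<Rightarrow> sposet" where
  "induced P W = P\<lparr>V := W, E := {e \<in> E P. fst (ends P e) \<in> W \<and> snd (ends P e) \<in> W}\<rparr>"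

lemma induced_simps [simp]:
  "V (induced P W) = W"
  "E (induced P W) = {e \<in> E P. fst (ends P e) \<in> W \<and> snd (ends P e) \<in> W}"
  "ends (induced P W) = ends P" "sgn (induced P W) = sgn P" "ori (induced P W) = ori P"
  unfolding induced_def by simp_all

lemma sgnval_induced [simp]: "sgnval (induced P W) = sgnval P"
  unfolding sgnval_def by simp

lemma abs_sgnval_mult [simp]: "\<bar>sgnval P e * z\<bar> = \<bar>z\<bar>"
  unfolding sgnval_def by simp

lemma is_orientation_finite: "is_orientation P \<Longrightarrow> finite (V P)"
  unfolding is_orientation_def by simp

lemma is_orientation_edgeD:
  assumes "is_orientation P" "e \<in> E P"
  shows "fst (ends P e) \<in> V P" "snd (ends P e) \<in> V P"
    "sgn P e \<Longrightarrow> fst (ori P e) \<noteq> snd (ori P e)" "\<not> sgn P e \<Longrightarrow> fst (ori P e) = snd (ori P e)"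
  using assms unfolding is_orientation_def by auto

lemma is_orientation_induced: "is_orientation P \<Longrightarrow> W \<subseteq> V P \<Longrightarrow> is_orientation (induced P W)"
  unfolding is_orientation_def using finite_subset by auto

lemma signed_poset_induced:
  assumes "signed_poset P" "W \<subseteq> V P"
  shows "signed_poset (induced P W)"
proof -
  have "is_cycle P n vs es" if "is_cycle (induced P W) n vs es" for n vs es
    using that unfolding is_cycle_def arrow_in_def arrow_out_def by auto
  then show ?thesis
    using assms is_orientation_induced unfolding signed_poset_def by blast
qed

lemma sink_set_finite: "is_orientation P \<Longrightarrow> finite (sink_set P)"
  unfolding sink_set_def by (simp add: is_orientation_finite)

lemma source_set_finite: "is_orientation P \<Longrightarrow> finite (source_set P)"
  unfolding source_set_def by (simp add: is_orientation_finite)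

definition alternating_walk :: "sposet \<Rightarrow> (nat \<Rightarrow> nat) \<Rightarrow> (nat \<Rightarrow> nat) \<Rightarrow> (nat \<Rightarrow> bool) \<Rightarrow> bool" where
  "alternating_walk P es w b \<longleftrightarrow> (\<forall>i.
     es i \<in> E P \<and> (ends P (es i) = (w i, w (Suc i)) \<or> ends P (es i) = (w (Suc i), w i)) \<and>
     (if b i then arrow_out P (es i) (w i) else arrow_in P (es i) (w i)) \<and>
     (if b (Suc i) then arrow_in P (es i) (w (Suc i)) else arrow_out P (es i) (w (Suc i))))"

lemma is_cycle_of_periodic_walk:
  assumes walk: "alternating_walk P es w b" and "i < j" and period: "(w i, b i) = (w j, b j)"
  shows "is_cycle P (j - i) (\<lambda>l. w (i + l)) (\<lambda>l. es (i + l))"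
  unfolding is_cycle_def
proof (intro conjI ballI allI impI)
  have leave: "if b k then arrow_out P (es k) (w k) else arrow_in P (es k) (w k)"
    and arrive: "if b (Suc k) then arrow_in P (es k) (w (Suc k)) else arrow_out P (es k) (w (Suc k))" for k
    using walk unfolding alternating_walk_def by blast+
  fix v assume "v \<in> (\<lambda>l. w (i + l)) ` {..<j - i}"
  then obtain l where l: "l < j - i" "v = w (i + l)" by auto
  \<comment> \<open>\<open>es (i + l')\<close> is the edge through which the walk enters \<open>v\<close>; for \<open>l = 0\<close> it closes the period\<close>
  obtain l' where l': "l' < j - i" "(w (i + Suc l'), b (i + Suc l')) = (w (i + l), b (i + l))"
  proof (cases l)
    case 0
    then show ?thesis using that[of "j - i - 1"] \<open>i < j\<close> period by simp
  next
    case (Suc m)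
    then show ?thesis using that[of m] l by simp
  qed
  have "es (i + l) \<in> (\<lambda>l. es (i + l)) ` {..<j - i}" "es (i + l') \<in> (\<lambda>l. es (i + l)) ` {..<j - i}"
    using l l' by auto
  moreover note leave[of "i + l"] arrive[of "i + l'"]
  ultimately show "\<exists>e\<in>(\<lambda>l. es (i + l)) ` {..<j - i}. arrow_in P e v"
    and "\<exists>e\<in>(\<lambda>l. es (i + l)) ` {..<j - i}. arrow_out P e v"
    using l'(2) l(2) by (auto split: if_splits)
qed (use assms in \<open>auto simp: alternating_walk_def\<close>)

text \<open>A walk that leaves \<open>w\<close> along \<open>e\<close>, by an outgoing arrow iff \<open>b\<close>, arrives at the other end of \<open>e\<close>;
  \<open>other_end\<close> returns that vertex and whether the arrow there points toward it.\<close>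

definition other_end :: "sposet \<Rightarrow> nat \<Rightarrow> nat \<Rightarrow> bool \<Rightarrow> nat \<times> bool" where
  "other_end P e w b =
     (if fst (ends P e) = w \<and> fst (ori P e) = (\<not> b) then (snd (ends P e), snd (ori P e))
      else (fst (ends P e), fst (ori P e)))"

lemma other_end:
  assumes "if b then arrow_out P e w else arrow_in P e w" "other_end P e w b = (w', b')"
  shows "(ends P e = (w, w') \<or> ends P e = (w', w)) \<and>
    (if b' then arrow_in P e w' else arrow_out P e w')"
  using assms unfolding other_end_def
  by (cases "ends P e") (auto simp: arrow_in_def arrow_out_def split: if_splits)

lemma alternating_walk_exists:
  assumes orient: "is_orientation P" and "e0 \<in> E P"
    and in_out: "\<forall>e\<in>E P. \<forall>w\<in>{fst (ends P e), snd (ends P e)}.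
                   (\<exists>e'\<in>E P. arrow_in P e' w) \<and> (\<exists>e'\<in>E P. arrow_out P e' w)"
  shows "\<exists>es w b. alternating_walk P es w b \<and> range w \<subseteq> V P"
proof -
  define touched where "touched w \<longleftrightarrow> (\<exists>e\<in>E P. w = fst (ends P e) \<or> w = snd (ends P e))" for w
  have "\<forall>w b. \<exists>e. touched w \<longrightarrow> e \<in> E P \<and> (if b then arrow_out P e w else arrow_in P e w)"
    using in_out unfolding touched_def by auto
  then obtain ch where ch: "\<And>w b. touched w \<Longrightarrow>
      ch w b \<in> E P \<and> (if b then arrow_out P (ch w b) w else arrow_in P (ch w b) w)"
    by metis
  have walk_step: "(ends P (ch w b) = (w, w') \<or> ends P (ch w b) = (w', w)) \<and>
      (if b' then arrow_in P (ch w b) w' else arrow_out P (ch w b) w') \<and> touched w'"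
    if "touched w" "other_end P (ch w b) w b = (w', b')" for w b w' b'
  proof -
    have "ch w b \<in> E P" "if b then arrow_out P (ch w b) w else arrow_in P (ch w b) w"
      using ch[OF that(1)] by blast+
    with other_end[OF this(2) that(2)] show ?thesis
      unfolding touched_def by (metis fst_conv snd_conv)
  qed
  define st where "st i = ((\<lambda>(w, b). other_end P (ch w b) w b) ^^ i) (fst (ends P e0), True)" for i
  have st_Suc: "st (Suc i) = other_end P (ch (fst (st i)) (snd (st i))) (fst (st i)) (snd (st i))" for i
    unfolding st_def by (simp add: case_prod_beta)
  have touched_st: "touched (fst (st i))" for i
  proof (induction i)
    case 0
    then show ?case using \<open>e0 \<in> E P\<close> unfolding st_def touched_def by auto
  next
    case (Suc i)
    then show ?case
      using walk_step[OF Suc, of "snd (st i)" "fst (st (Suc i))" "snd (st (Suc i))"] st_Suc[of i] by simp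
  qed
  have "other_end P (ch (fst (st i)) (snd (st i))) (fst (st i)) (snd (st i)) =
      (fst (st (Suc i)), snd (st (Suc i)))" for i
    using st_Suc[of i] by simp
  then have "alternating_walk P (\<lambda>i. ch (fst (st i)) (snd (st i))) (\<lambda>i. fst (st i)) (\<lambda>i. snd (st i))"
    using ch[OF touched_st] walk_step[OF touched_st] unfolding alternating_walk_def by blast
  moreover have "fst (st i) \<in> V P" for i
    using touched_st[of i] is_orientation_edgeD[OF orient] unfolding touched_def by auto
  ultimately show ?thesis
    by blast
qed

lemma cycle_if_in_and_out_arrows:
  assumes orient: "is_orientation P" and "e0 \<in> E P"
    and in_out: "\<forall>e\<in>E P. \<forall>w\<in>{fst (ends P e), snd (ends P e)}.
                   (\<exists>e'\<in>E P. arrow_in P e' w) \<and> (\<exists>e'\<in>E P. arrow_out P e' w)"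
  shows "\<exists>n vs es. is_cycle P n vs es"
proof -
  obtain es w b where walk: "alternating_walk P es w b" and "range w \<subseteq> V P"
    using alternating_walk_exists[OF assms] by blast
  then have "range (\<lambda>i. (w i, b i)) \<subseteq> V P \<times> UNIV"
    by auto
  then have "finite (range (\<lambda>i. (w i, b i)))"
    by (rule finite_subset) (simp add: is_orientation_finite[OF orient])
  then have "\<not> inj (\<lambda>i. (w i, b i))"
    using finite_imageD[of _ UNIV] by auto
  then obtain x y where "x \<noteq> y" "(w x, b x) = (w y, b y)"
    unfolding inj_def by blast
  then obtain i j where "i < j" "(w i, b i) = (w j, b j)"
    by (metis linorder_neqE_nat)
  then show ?thesis
    using is_cycle_of_periodic_walk[OF walk] by blast
qed

lemma sink_set_ne_source_set:
  assumes "signed_poset P" "E P \<noteq> {}"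
  shows "sink_set P \<noteq> source_set P"
proof
  assume eq: "sink_set P = source_set P"
  have orient: "is_orientation P"
    using assms(1) unfolding signed_poset_def by simp
  have "\<forall>e\<in>E P. \<forall>w\<in>{fst (ends P e), snd (ends P e)}.
      (\<exists>e'\<in>E P. arrow_in P e' w) \<and> (\<exists>e'\<in>E P. arrow_out P e' w)"
  proof (intro ballI)
    fix e w assume e: "e \<in> E P" and w: "w \<in> {fst (ends P e), snd (ends P e)}"
    show "(\<exists>e'\<in>E P. arrow_in P e' w) \<and> (\<exists>e'\<in>E P. arrow_out P e' w)"
    proof (rule ccontr)
      assume "\<not> ?thesis"
      then have "w \<in> source_set P \<or> w \<in> sink_set P"
        using is_orientation_edgeD[OF orient e] w
        unfolding source_set_def is_source_def sink_set_def is_sink_def arrow_in_def arrow_out_def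
        by auto
      then have "is_sink P w \<and> is_source P w"
        using eq unfolding sink_set_def source_set_def by auto
      then show False
        using e w unfolding is_sink_def is_source_def by auto
    qed
  qed
  moreover obtain e0 where "e0 \<in> E P"
    using assms(2) by blast
  ultimately have "\<exists>n vs es. is_cycle P n vs es"
    using cycle_if_in_and_out_arrows[OF orient] by blast
  then show False
    using assms(1) unfolding signed_poset_def by blast
qed

text \<open>\<open>(x, y, p, q) \<in> half_edges P e\<close> is the half-edge of \<open>e\<close> at \<open>x\<close>, whose other end is \<open>y\<close>;
  \<open>p\<close> and \<open>q\<close> say whether the arrows at \<open>x\<close> and at \<open>y\<close> point toward their vertices.\<close>

definition half_edges :: "sposet \<Rightarrow> nat \<Rightarrow> (nat \<times> nat \<times> bool \<times> bool) set" where
  "half_edges P e = {(fst (ends P e), snd (ends P e), fst (ori P e), snd (ori P e)),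
                     (snd (ends P e), fst (ends P e), snd (ori P e), fst (ori P e))}"

lemma half_edges_swap: "(x, y, p, q) \<in> half_edges P e \<Longrightarrow> (y, x, q, p) \<in> half_edges P e"
  unfolding half_edges_def by (simp only: insert_iff prod.inject empty_iff) blast

lemma half_edge_orientation:
  assumes "is_orientation P" "e \<in> E P" "(x, y, p, q) \<in> half_edges P e"
  shows "x \<in> V P" "y \<in> V P" "sgn P e \<Longrightarrow> p \<noteq> q" "\<not> sgn P e \<Longrightarrow> p = q"
  using assms(3) is_orientation_edgeD[OF assms(1,2)] unfolding half_edges_def by (auto simp del: prod.collapse)

lemma is_sink_iff_half_edges:
  "is_sink P v \<longleftrightarrow> v \<in> V P \<and> (\<forall>e\<in>E P. \<forall>(x, y, p, q)\<in>half_edges P e. x = v \<longrightarrow> p)"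
  unfolding is_sink_def half_edges_def by auto

lemma is_source_iff_half_edges:
  "is_source P v \<longleftrightarrow> v \<in> V P \<and> (\<forall>e\<in>E P. \<forall>(x, y, p, q)\<in>half_edges P e. x = v \<longrightarrow> \<not> p)"
  unfolding is_source_def half_edges_def by auto

lemma proper_preserving_iff_half_edges:
  "proper_col P \<kappa> \<and> preserves P \<kappa> \<longleftrightarrow>
     (\<forall>e\<in>E P. \<forall>(x, y, p, q)\<in>half_edges P e.
        \<kappa> x \<noteq> sgnval P e * \<kappa> y \<and> (p \<longleftrightarrow> sgnval P e * \<kappa> y < \<kappa> x))"
  unfolding proper_col_def preserves_def half_edges_def sgnval_def by auto

lemma proper_preserving_half_edgeD:
  assumes "proper_col P \<kappa>" "preserves P \<kappa>" "e \<in> E P" "(x, y, p, q) \<in> half_edges P e"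
  shows "\<kappa> x \<noteq> sgnval P e * \<kappa> y" "p \<longleftrightarrow> sgnval P e * \<kappa> y < \<kappa> x"
  using assms proper_preserving_iff_half_edges[of P \<kappa>] by fast+

definition top_level :: "nat set \<Rightarrow> (nat \<Rightarrow> int) \<Rightarrow> int" where
  "top_level W \<kappa> = Max (insert 0 ((\<lambda>v. \<bar>\<kappa> v\<bar>) ` W))"

definition gapless :: "nat set \<Rightarrow> (nat \<Rightarrow> int) \<Rightarrow> bool" where
  "gapless W \<kappa> \<longleftrightarrow> (\<forall>j. 1 \<le> j \<and> j \<le> top_level W \<kappa> \<longrightarrow> (\<exists>v\<in>W. \<bar>\<kappa> v\<bar> = j))"

lemma abs_le_top_level: "finite W \<Longrightarrow> v \<in> W \<Longrightarrow> \<bar>\<kappa> v\<bar> \<le> top_level W \<kappa>"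
  unfolding top_level_def by (rule Max_ge) auto

lemma top_level_nonneg: "finite W \<Longrightarrow> 0 \<le> top_level W \<kappa>"
  unfolding top_level_def by (rule Max_ge) auto

lemma top_level_attained: "finite W \<Longrightarrow> 0 < top_level W \<kappa> \<Longrightarrow> \<exists>v\<in>W. \<bar>\<kappa> v\<bar> = top_level W \<kappa>"
  using Max_in[of "insert 0 ((\<lambda>v. \<bar>\<kappa> v\<bar>) ` W)"] unfolding top_level_def by auto

lemma top_level_eqI:
  assumes "finite W" "0 \<le> N" "\<And>v. v \<in> W \<Longrightarrow> \<bar>\<kappa> v\<bar> \<le> N" "N = 0 \<or> (\<exists>v\<in>W. \<bar>\<kappa> v\<bar> = N)"
  shows "top_level W \<kappa> = N"
proof -
  have "top_level W \<kappa> \<le> N"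
    using assms(1-3) unfolding top_level_def by (subst Max_le_iff) auto
  moreover have "N \<le> top_level W \<kappa>"
    using assms(4) abs_le_top_level[OF assms(1)] top_level_nonneg[OF assms(1), of \<kappa>] by auto
  ultimately show ?thesis
    by simp
qed

lemma top_level_restrict [simp]: "top_level W (restrict \<kappa> W) = top_level W \<kappa>"
  unfolding top_level_def by (simp cong: image_cong)

lemma top_level_zero [simp]: "top_level W (\<lambda>_. 0) = 0"
  unfolding top_level_def by (simp add: image_constant_conv)

lemma gapless_restrict [simp]: "gapless W (restrict \<kappa> W) = gapless W \<kappa>"
  unfolding gapless_def by simp

lemma top_level_le_card:
  assumes "finite W" "gapless W \<kappa>"
  shows "top_level W \<kappa> \<le> int (card W)"
proof -
  have "{1..top_level W \<kappa>} \<subseteq> (\<lambda>v. \<bar>\<kappa> v\<bar>) ` W"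
    using assms(2) unfolding gapless_def by force
  then have "card {1..top_level W \<kappa>} \<le> card W"
    using card_mono[OF finite_imageI[OF assms(1)]] card_image_le[OF assms(1)] le_trans by blast
  then show ?thesis by simp
qed

lemma gapless_below_top_level:
  assumes "finite W" "gapless W \<kappa>" "top_level W \<kappa> = N" "1 \<le> N"
  defines "U \<equiv> {v \<in> W. \<bar>\<kappa> v\<bar> < N}"
  shows "gapless U \<kappa>" "top_level U \<kappa> = N - 1"
proof -
  have levels: "(\<exists>v\<in>U. \<bar>\<kappa> v\<bar> = j) \<longleftrightarrow> 1 \<le> j \<and> j \<le> N - 1" if "1 \<le> j" for j
    using assms(2,3) abs_le_top_level[OF assms(1), of _ \<kappa>] that
    unfolding gapless_def U_def by force
  have "N - 1 = 0 \<or> (\<exists>v\<in>U. \<bar>\<kappa> v\<bar> = N - 1)"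
    using levels[of "N - 1"] assms(4) by (cases "N = 1") auto
  then show "top_level U \<kappa> = N - 1"
    by (intro top_level_eqI) (use assms(1,4) in \<open>auto simp: U_def\<close>)
  then show "gapless U \<kappa>"
    unfolding gapless_def using levels by simp
qed

definition gapless_colorings :: "sposet \<Rightarrow> (nat \<Rightarrow> int) set" where
  "gapless_colorings P =
     {\<kappa> \<in> V P \<rightarrow>\<^sub>E UNIV. proper_col P \<kappa> \<and> preserves P \<kappa> \<and> gapless (V P) \<kappa>}"

lemma finite_gapless_colorings:
  assumes "is_orientation P"
  shows "finite (gapless_colorings P)"
proof -
  let ?c = "int (card (V P))"
  have "gapless_colorings P \<subseteq> V P \<rightarrow>\<^sub>E {-?c..?c}"
  proof
    fix \<kappa> assume \<kappa>: "\<kappa> \<in> gapless_colorings P"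
    then have "\<bar>\<kappa> v\<bar> \<le> ?c" if "v \<in> V P" for v
      using abs_le_top_level[OF is_orientation_finite[OF assms] that, of \<kappa>]
        top_level_le_card[OF is_orientation_finite[OF assms], of \<kappa>] \<kappa>
      unfolding gapless_colorings_def by simp
    then show "\<kappa> \<in> V P \<rightarrow>\<^sub>E {-?c..?c}"
      using \<kappa> unfolding gapless_colorings_def by (force simp: PiE_iff abs_le_iff)
  qed
  then show ?thesis
    by (rule finite_subset) (simp add: finite_PiE is_orientation_finite[OF assms])
qed

section \<open>Removing the top level of a gapless coloring\<close>

definition peak_pairs :: "sposet \<Rightarrow> (nat set \<times> nat set) set" where
  "peak_pairs P = {(T, B). T \<subseteq> sink_set P \<and> B \<subseteq> source_set P \<and> T \<inter> B = {} \<and> T \<union> B \<noteq> {}}"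

definition extend_coloring :: "nat set \<Rightarrow> nat set \<Rightarrow> int \<Rightarrow> (nat \<Rightarrow> int) \<Rightarrow> nat \<Rightarrow> int" where
  "extend_coloring T B N \<kappa> v = (if v \<in> T then N else if v \<in> B then - N else \<kappa> v)"

lemma peak_pairsD:
  assumes "(T, B) \<in> peak_pairs P"
  shows "T \<subseteq> sink_set P" "B \<subseteq> source_set P" "T \<subseteq> V P" "B \<subseteq> V P" "T \<inter> B = {}" "T \<union> B \<noteq> {}"
  using assms unfolding peak_pairs_def sink_set_def source_set_def by auto

lemma finite_peak_pairs: "is_orientation P \<Longrightarrow> finite (peak_pairs P)"
  by (rule finite_subset[of _ "Pow (V P) \<times> Pow (V P)"])
     (auto dest: peak_pairsD simp: is_orientation_finite)

lemma extreme_color_sink_source: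
  assumes "is_orientation P" "proper_col P \<kappa>" "preserves P \<kappa>" "\<And>u. u \<in> V P \<Longrightarrow> \<bar>\<kappa> u\<bar> \<le> N"
    and "v \<in> V P"
  shows "\<kappa> v = N \<Longrightarrow> is_sink P v" "\<kappa> v = - N \<Longrightarrow> is_source P v"
proof -
  have "(\<kappa> x = N \<longrightarrow> p) \<and> (\<kappa> x = - N \<longrightarrow> \<not> p)"
    if "e \<in> E P" "(x, y, p, q) \<in> half_edges P e" for e x y p q
  proof -
    have "\<kappa> x \<noteq> sgnval P e * \<kappa> y" "p \<longleftrightarrow> sgnval P e * \<kappa> y < \<kappa> x"
      by (rule proper_preserving_half_edgeD[OF assms(2,3) that])+
    moreover have "\<bar>sgnval P e * \<kappa> y\<bar> \<le> N"
      using assms(4)[OF half_edge_orientation(2)[OF assms(1) that]] by simp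
    ultimately show ?thesis
      by (auto simp: abs_le_iff simp del: abs_sgnval_mult)
  qed
  then show "\<kappa> v = N \<Longrightarrow> is_sink P v" "\<kappa> v = - N \<Longrightarrow> is_source P v"
    using \<open>v \<in> V P\<close> unfolding is_sink_iff_half_edges is_source_iff_half_edges by fast+
qed

text \<open>\<open>kx\<close> and \<open>ky\<close> are the colors at the ends of an edge of sign \<open>sg\<close> with arrows \<open>p\<close> and \<open>q\<close>;
  an end colored \<open>N\<close> is a sink and an end colored \<open>-N\<close> a source.\<close>

lemma half_edge_at_top_level:
  fixes kx ky N :: int
  assumes "1 \<le> N" "sg \<longrightarrow> p \<noteq> q" "\<not> sg \<longrightarrow> p = q"
    and "kx = N \<and> p \<or> kx = - N \<and> \<not> p \<or> \<bar>kx\<bar> < N" "ky = N \<and> q \<or> ky = - N \<and> \<not> q \<or> \<bar>ky\<bar> < N"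
    and "\<bar>kx\<bar> = N \<or> \<bar>ky\<bar> = N"
  shows "kx \<noteq> (if sg then 1 else - 1) * ky \<and> (p \<longleftrightarrow> (if sg then 1 else - 1) * ky < kx)"
  using assms by (cases sg) (auto simp: abs_if split: if_splits)

lemma proper_preserving_induced:
  assumes "proper_col P \<kappa>" "preserves P \<kappa>"
  shows "proper_col (induced P W) (restrict \<kappa> W)" "preserves (induced P W) (restrict \<kappa> W)"
  using assms unfolding proper_col_def preserves_def by auto

lemma peel_gapless_coloring:
  assumes orient: "is_orientation P" and \<kappa>: "\<kappa> \<in> gapless_colorings P"
    and N: "top_level (V P) \<kappa> = N" "1 \<le> N"
  defines "T \<equiv> {v \<in> V P. \<kappa> v = N}" and "B \<equiv> {v \<in> V P. \<kappa> v = - N}"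
  shows "(T, B) \<in> peak_pairs P"
    and "restrict \<kappa> (V P - T - B) \<in> gapless_colorings (induced P (V P - T - B))"
    and "top_level (V P - T - B) (restrict \<kappa> (V P - T - B)) = N - 1"
    and "extend_coloring T B N (restrict \<kappa> (V P - T - B)) = \<kappa>"
proof -
  have fin: "finite (V P)"
    using orient by (rule is_orientation_finite)
  have bound: "\<bar>\<kappa> v\<bar> \<le> N" if "v \<in> V P" for v
    using abs_le_top_level[OF fin that, of \<kappa>] N by simp
  have W: "V P - T - B = {v \<in> V P. \<bar>\<kappa> v\<bar> < N}"
    using bound unfolding T_def B_def by force
  have col: "\<kappa> \<in> V P \<rightarrow>\<^sub>E UNIV" "proper_col P \<kappa>" "preserves P \<kappa>" "gapless (V P) \<kappa>"
    using \<kappa> unfolding gapless_colorings_def by auto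
  have "T \<subseteq> sink_set P" "B \<subseteq> source_set P"
    using extreme_color_sink_source[OF orient col(2,3) bound]
    unfolding T_def B_def sink_set_def source_set_def by auto
  moreover have "T \<union> B \<noteq> {}"
  proof -
    obtain v where "v \<in> V P" "\<bar>\<kappa> v\<bar> = N"
      using top_level_attained[OF fin, of \<kappa>] N by auto
    then show ?thesis
      unfolding T_def B_def by (cases "\<kappa> v \<ge> 0") auto
  qed
  ultimately show "(T, B) \<in> peak_pairs P"
    using N(2) unfolding peak_pairs_def T_def B_def by auto
  show "top_level (V P - T - B) (restrict \<kappa> (V P - T - B)) = N - 1"
    using gapless_below_top_level(2)[OF fin col(4) N] W by simp
  moreover have "gapless (V P - T - B) (restrict \<kappa> (V P - T - B))"
    using gapless_below_top_level(1)[OF fin col(4) N] W by simp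
  ultimately show "restrict \<kappa> (V P - T - B) \<in> gapless_colorings (induced P (V P - T - B))"
    using proper_preserving_induced[OF col(2,3)] unfolding gapless_colorings_def by simp
  show "extend_coloring T B N (restrict \<kappa> (V P - T - B)) = \<kappa>"
    using col(1) unfolding extend_coloring_def T_def B_def by (force simp: PiE_iff extensional_def)
qed

lemma extend_coloring_levels:
  assumes fin: "finite U" and "T \<subseteq> U" "B \<subseteq> U" "T \<inter> B = {}" "T \<union> B \<noteq> {}"
    and gap: "gapless (U - T - B) \<kappa>"
  defines "N \<equiv> top_level (U - T - B) \<kappa> + 1"
  shows "top_level U (extend_coloring T B N \<kappa>) = N" "gapless U (extend_coloring T B N \<kappa>)"
    and "{v \<in> U. extend_coloring T B N \<kappa> v = N} = T" "{v \<in> U. extend_coloring T B N \<kappa> v = - N} = B"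
proof -
  let ?K = "extend_coloring T B N \<kappa>"
  have N: "1 \<le> N"
    using top_level_nonneg[of "U - T - B" \<kappa>] fin unfolding N_def by simp
  have below: "\<bar>\<kappa> v\<bar> < N" if "v \<in> U - T - B" for v
    using abs_le_top_level[of "U - T - B" v \<kappa>] fin that unfolding N_def by simp
  have K: "v \<in> T \<Longrightarrow> ?K v = N" "v \<in> B \<Longrightarrow> ?K v = - N" "v \<in> U - T - B \<Longrightarrow> ?K v = \<kappa> v" for v
    using assms(4) unfolding extend_coloring_def by auto
  have K_cases: "v \<in> T \<and> ?K v = N \<or> v \<in> B \<and> ?K v = - N \<or> v \<in> U - T - B \<and> \<bar>?K v\<bar> < N"
    if "v \<in> U" for v
    using that K below[of v] by (cases "v \<in> T"; cases "v \<in> B") auto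
  obtain t where t: "t \<in> T \<union> B"
    using assms(5) by blast
  then have "\<bar>?K t\<bar> = N" "t \<in> U"
    using K N assms(2,3) by auto
  show top: "top_level U ?K = N"
  proof (rule top_level_eqI)
    show "\<bar>?K v\<bar> \<le> N" if "v \<in> U" for v
      using K_cases[OF that] N by auto
  qed (use fin N \<open>t \<in> U\<close> \<open>\<bar>?K t\<bar> = N\<close> in auto)
  show "gapless U ?K"
    unfolding gapless_def top
  proof (intro allI impI)
    fix j :: int assume j: "1 \<le> j \<and> j \<le> N"
    show "\<exists>v\<in>U. \<bar>?K v\<bar> = j"
    proof (cases "j = N")
      case False
      then obtain v where "v \<in> U - T - B" "\<bar>\<kappa> v\<bar> = j"
        using gap j unfolding gapless_def N_def by auto
      then show ?thesis
        using K(3) by (intro bexI[of _ v]) auto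
    qed (use \<open>t \<in> U\<close> \<open>\<bar>?K t\<bar> = N\<close> in blast)
  qed
  show "{v \<in> U. ?K v = N} = T" "{v \<in> U. ?K v = - N} = B"
    using K_cases K(1,2) N assms(2,3) by fastforce+
qed

lemma proper_preserving_extend_coloring:
  assumes orient: "is_orientation P" and TB: "(T, B) \<in> peak_pairs P"
    and \<kappa>: "\<kappa> \<in> gapless_colorings (induced P (V P - T - B))"
  defines "N \<equiv> top_level (V P - T - B) \<kappa> + 1"
  shows "proper_col P (extend_coloring T B N \<kappa>) \<and> preserves P (extend_coloring T B N \<kappa>)"
  unfolding proper_preserving_iff_half_edges
proof (intro ballI, clarify)
  let ?K = "extend_coloring T B N \<kappa>" and ?W = "V P - T - B"
  fix e x y p q assume e: "e \<in> E P" and h: "(x, y, p, q) \<in> half_edges P e"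
  have fin: "finite ?W"
    using is_orientation_finite[OF orient] by simp
  have "1 \<le> N"
    using top_level_nonneg[OF fin, of \<kappa>] unfolding N_def by simp
  have level_cases: "?K u = N \<and> a \<or> ?K u = - N \<and> \<not> a \<or> u \<in> ?W \<and> \<bar>?K u\<bar> < N"
    if "(u, u', a, a') \<in> half_edges P e" for u u' a a'
    using peak_pairsD[OF TB] half_edge_orientation(1)[OF orient e that] e that
      abs_le_top_level[OF fin, of u \<kappa>]
    unfolding extend_coloring_def N_def sink_set_def source_set_def
      is_sink_iff_half_edges is_source_iff_half_edges by force
  show "?K x \<noteq> sgnval P e * ?K y \<and> (p \<longleftrightarrow> sgnval P e * ?K y < ?K x)"
  proof (cases "x \<in> ?W \<and> y \<in> ?W")
    case True
    then have "e \<in> E (induced P ?W)" "(x, y, p, q) \<in> half_edges (induced P ?W) e"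
      using e h unfolding half_edges_def by auto
    moreover have "?K x = \<kappa> x" "?K y = \<kappa> y"
      using True unfolding extend_coloring_def by auto
    ultimately show ?thesis
      using \<kappa> proper_preserving_half_edgeD[of "induced P ?W" \<kappa>]
      unfolding gapless_colorings_def by simp
  next
    case False
    have "\<bar>?K u\<bar> = N" if "(u, u', a, a') \<in> half_edges P e" "u \<notin> ?W" for u u' a a'
      using level_cases[OF that(1)] that(2) \<open>1 \<le> N\<close> by auto
    then have "\<bar>?K x\<bar> = N \<or> \<bar>?K y\<bar> = N"
      using False h half_edges_swap[OF h] by blast
    moreover have "?K x = N \<and> p \<or> ?K x = - N \<and> \<not> p \<or> \<bar>?K x\<bar> < N"
      "?K y = N \<and> q \<or> ?K y = - N \<and> \<not> q \<or> \<bar>?K y\<bar> < N"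
      using level_cases[OF h] level_cases[OF half_edges_swap[OF h]] by blast+
    ultimately have "?K x \<noteq> (if sgn P e then 1 else - 1) * ?K y \<and>
        (p \<longleftrightarrow> (if sgn P e then 1 else - 1) * ?K y < ?K x)"
      using half_edge_orientation(3,4)[OF orient e h] by (intro half_edge_at_top_level[OF \<open>1 \<le> N\<close>]) auto
    then show ?thesis
      unfolding sgnval_def .
  qed
qed

lemma extend_gapless_coloring:
  assumes orient: "is_orientation P" and TB: "(T, B) \<in> peak_pairs P"
    and \<kappa>: "\<kappa> \<in> gapless_colorings (induced P (V P - T - B))"
  defines "N \<equiv> top_level (V P - T - B) \<kappa> + 1"
  shows "extend_coloring T B N \<kappa> \<in> gapless_colorings P"
    and "top_level (V P) (extend_coloring T B N \<kappa>) = N"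
    and "{v \<in> V P. extend_coloring T B N \<kappa> v = N} = T"
    and "{v \<in> V P. extend_coloring T B N \<kappa> v = - N} = B"
    and "restrict (extend_coloring T B N \<kappa>) (V P - T - B) = \<kappa>"
proof -
  have gap: "gapless (V P - T - B) \<kappa>" and ext: "\<kappa> \<in> (V P - T - B) \<rightarrow>\<^sub>E UNIV"
    using \<kappa> unfolding gapless_colorings_def by auto
  note levels = extend_coloring_levels[OF is_orientation_finite[OF orient] peak_pairsD(3-6)[OF TB] gap]
  show "top_level (V P) (extend_coloring T B N \<kappa>) = N"
    and "{v \<in> V P. extend_coloring T B N \<kappa> v = N} = T"
    and "{v \<in> V P. extend_coloring T B N \<kappa> v = - N} = B"
    using levels(1,3,4) unfolding N_def .
  have "extend_coloring T B N \<kappa> \<in> V P \<rightarrow>\<^sub>E UNIV"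
    using ext peak_pairsD(3,4)[OF TB] unfolding extend_coloring_def by (auto simp: PiE_iff extensional_def)
  then show "extend_coloring T B N \<kappa> \<in> gapless_colorings P"
    using proper_preserving_extend_coloring[OF orient TB \<kappa>] levels(2)
    unfolding gapless_colorings_def N_def by simp
  show "restrict (extend_coloring T B N \<kappa>) (V P - T - B) = \<kappa>"
    using ext unfolding extend_coloring_def by (force simp: PiE_iff extensional_def)
qed

lemma gapless_colorings_top_level_zero:
  assumes orient: "is_orientation P"
  shows "{\<kappa> \<in> gapless_colorings P. top_level (V P) \<kappa> = 0} =
           (if E P = {} then {restrict (\<lambda>_. 0) (V P)} else {})"
proof -
  have fin: "finite (V P)"
    using orient by (rule is_orientation_finite)
  have zero: "\<kappa> = restrict (\<lambda>_. 0) (V P)" if "\<kappa> \<in> V P \<rightarrow>\<^sub>E UNIV" "top_level (V P) \<kappa> = 0" for \<kappa>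
    using that abs_le_top_level[OF fin, of _ \<kappa>] by (force simp: PiE_iff extensional_def)
  have top: "top_level (V P) (restrict (\<lambda>_. 0) (V P)) = 0"
    by (rule top_level_eqI) (auto simp: fin)
  show ?thesis
  proof (cases "E P = {}")
    case True
    then have "restrict (\<lambda>_. 0) (V P) \<in> gapless_colorings P"
      using top unfolding gapless_colorings_def gapless_def proper_col_def preserves_def by auto
    then show ?thesis
      using True top zero unfolding gapless_colorings_def by auto
  next
    case False
    then obtain e where "e \<in> E P"
      by blast
    then have "\<not> proper_col P (restrict (\<lambda>_. 0) (V P))"
      using is_orientation_edgeD(1,2)[OF orient] unfolding proper_col_def by auto
    then show ?thesis
      using False zero unfolding gapless_colorings_def by auto
  qed
qed

lemma sum_gapless_colorings_top_level_nonzero: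
  fixes g :: "(nat \<Rightarrow> int) \<Rightarrow> 'a::comm_monoid_add"
  assumes orient: "is_orientation P"
  shows "(\<Sum>\<kappa>\<in>{\<kappa> \<in> gapless_colorings P. top_level (V P) \<kappa> \<noteq> 0}. g \<kappa>) =
     (\<Sum>(T, B)\<in>peak_pairs P. \<Sum>\<kappa>\<in>gapless_colorings (induced P (V P - T - B)).
        g (extend_coloring T B (top_level (V P - T - B) \<kappa> + 1) \<kappa>))"
proof -
  have fin: "finite (V P)"
    using orient by (rule is_orientation_finite)
  define below where "below TB = gapless_colorings (induced P (V P - fst TB - snd TB))" for TB
  define extend where
    "extend x = extend_coloring (fst (fst x)) (snd (fst x))
                  (top_level (V P - fst (fst x) - snd (fst x)) (snd x) + 1) (snd x)" for x
  define peel where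
    "peel \<kappa> = (let N = top_level (V P) \<kappa>; T = {v \<in> V P. \<kappa> v = N}; B = {v \<in> V P. \<kappa> v = - N}
                in ((T, B), restrict \<kappa> (V P - T - B)))" for \<kappa>
  have "(\<Sum>\<kappa>\<in>{\<kappa> \<in> gapless_colorings P. top_level (V P) \<kappa> \<noteq> 0}. g \<kappa>) =
      (\<Sum>x\<in>Sigma (peak_pairs P) below. g (extend x))"
  proof (rule sum.reindex_bij_witness[symmetric, where i = peel and j = extend])
    fix x assume "x \<in> Sigma (peak_pairs P) below"
    then obtain T B \<kappa> where x: "x = ((T, B), \<kappa>)" "(T, B) \<in> peak_pairs P"
      "\<kappa> \<in> gapless_colorings (induced P (V P - T - B))"
      unfolding below_def by auto
    note ext = extend_gapless_coloring[OF orient x(2,3)]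
    show "peel (extend x) = x"
      using ext(2-5) unfolding x peel_def extend_def by simp
    show "extend x \<in> {\<kappa> \<in> gapless_colorings P. top_level (V P) \<kappa> \<noteq> 0}"
      using ext(1,2) top_level_nonneg[of "V P - T - B" \<kappa>] fin unfolding x extend_def by simp
  next
    fix \<kappa> assume "\<kappa> \<in> {\<kappa> \<in> gapless_colorings P. top_level (V P) \<kappa> \<noteq> 0}"
    then have \<kappa>: "\<kappa> \<in> gapless_colorings P" "1 \<le> top_level (V P) \<kappa>"
      using top_level_nonneg[OF fin, of \<kappa>] by auto
    note peeled = peel_gapless_coloring[OF orient \<kappa>(1) refl \<kappa>(2)]
    show "extend (peel \<kappa>) = \<kappa>"
      using peeled(3,4) unfolding peel_def extend_def Let_def by simp
    show "peel \<kappa> \<in> Sigma (peak_pairs P) below"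
      using peeled(1,2) unfolding peel_def below_def Let_def by simp
  qed simp
  also have "\<dots> = (\<Sum>(TB, \<kappa>)\<in>Sigma (peak_pairs P) below. g (extend (TB, \<kappa>)))"
    by (simp add: case_prod_beta)
  also have "\<dots> = (\<Sum>TB\<in>peak_pairs P. \<Sum>\<kappa>\<in>below TB. g (extend (TB, \<kappa>)))"
    by (rule sum.Sigma[symmetric])
       (auto simp: finite_peak_pairs[OF orient] below_def
         intro!: finite_gapless_colorings is_orientation_induced[OF orient])
  finally show ?thesis
    unfolding below_def extend_def by (simp add: case_prod_beta)
qed

lemma sum_gapless_colorings_peel:
  fixes g :: "(nat \<Rightarrow> int) \<Rightarrow> 'a::comm_monoid_add"
  assumes orient: "is_orientation P"
  shows "(\<Sum>\<kappa>\<in>gapless_colorings P. g \<kappa>) =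
     (if E P = {} then g (restrict (\<lambda>_. 0) (V P)) else 0) +
     (\<Sum>(T, B)\<in>peak_pairs P. \<Sum>\<kappa>\<in>gapless_colorings (induced P (V P - T - B)).
        g (extend_coloring T B (top_level (V P - T - B) \<kappa> + 1) \<kappa>))"
proof -
  let ?K0 = "{\<kappa> \<in> gapless_colorings P. top_level (V P) \<kappa> = 0}"
  let ?K1 = "{\<kappa> \<in> gapless_colorings P. top_level (V P) \<kappa> \<noteq> 0}"
  have "(\<Sum>\<kappa>\<in>gapless_colorings P. g \<kappa>) = sum g (?K0 \<union> ?K1)"
    by (rule sum.cong) auto
  also have "\<dots> = sum g ?K0 + sum g ?K1"
    by (rule sum.union_disjoint) (use finite_gapless_colorings[OF orient] in auto)
  finally show ?thesis
    unfolding gapless_colorings_top_level_zero[OF orient] sum_gapless_colorings_top_level_nonzero[OF orient]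
    by simp
qed

lemma sum_peak_pairs_alternating:
  assumes "is_orientation P"
  shows "(\<Sum>(T, B)\<in>peak_pairs P. (- 1 :: 'a::comm_ring_1) ^ (card T + card B)) =
           (if sink_set P = source_set P then (- 1) ^ card (sink_set P) else 0) - 1"
proof -
  have "{(T, B). T \<subseteq> sink_set P \<and> B \<subseteq> source_set P \<and> T \<inter> B = {}} = insert ({}, {}) (peak_pairs P)"
    unfolding peak_pairs_def by auto
  moreover have "({}, {}) \<notin> peak_pairs P"
    unfolding peak_pairs_def by simp
  ultimately have "1 + (\<Sum>(T, B)\<in>peak_pairs P. (- 1 :: 'a) ^ (card T + card B)) =
      (if sink_set P = source_set P then (- 1) ^ card (sink_set P) else 0)"
    using sum_alternating_disjoint_pairs[OF sink_set_finite[OF assms] source_set_finite[OF assms], where 'a = 'a]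
      finite_peak_pairs[OF assms] by simp
  then show ?thesis
    by (simp add: eq_diff_eq add.commute)
qed

definition parity_weight :: "nat set \<Rightarrow> (nat \<Rightarrow> int) \<Rightarrow> rat poly" where
  "parity_weight W \<kappa> = (- 1) ^ (nat (top_level W \<kappa>) + card W)"

definition top_weight :: "nat set \<Rightarrow> (nat \<Rightarrow> int) \<Rightarrow> rat poly" where
  "top_weight W \<kappa> =
     (let N = top_level W \<kappa>; c = card {v \<in> W. \<kappa> v = N}
      in if 1 \<le> N \<and> (\<forall>v\<in>W. \<kappa> v \<noteq> - N) then [:- 1, 1:] ^ c * (- 1) ^ (nat N - 1 + (card W - c)) else 0)"

lemma weights_extend_coloring:
  assumes orient: "is_orientation P" and TB: "(T, B) \<in> peak_pairs P"
    and \<kappa>: "\<kappa> \<in> gapless_colorings (induced P (V P - T - B))"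
  defines "K \<equiv> extend_coloring T B (top_level (V P - T - B) \<kappa> + 1) \<kappa>"
  shows "parity_weight (V P) K = - ((- 1) ^ (card T + card B)) * parity_weight (V P - T - B) \<kappa>"
    and "top_weight (V P) K = (if B = {} then [:- 1, 1:] ^ card T else 0) * parity_weight (V P - T - B) \<kappa>"
proof -
  note TB' = peak_pairsD[OF TB]
  have fin: "finite (V P)"
    using orient by (rule is_orientation_finite)
  have "V P = (V P - T - B) \<union> T \<union> B"
    using TB'(3,4) by auto
  then have card_V: "card (V P) = card (V P - T - B) + card T + card B"
    using TB'(3-5) fin finite_subset card_Un_disjoint
    by (metis Diff_disjoint Int_Un_distrib2 Un_Diff_cancel2 Un_empty finite_Un inf_commute)
  have nat_top: "nat (top_level (V P - T - B) \<kappa> + 1) = Suc (nat (top_level (V P - T - B) \<kappa>))"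
    using top_level_nonneg[of "V P - T - B" \<kappa>] fin by simp
  note ext = extend_gapless_coloring(2-4)[OF orient TB \<kappa>, folded K_def]
  show "parity_weight (V P) K = - ((- 1) ^ (card T + card B)) * parity_weight (V P - T - B) \<kappa>"
    unfolding parity_weight_def ext(1) nat_top card_V by (simp add: power_add)
  have "(\<forall>v\<in>V P. K v \<noteq> - (top_level (V P - T - B) \<kappa> + 1)) \<longleftrightarrow> B = {}"
    using ext(3) by auto
  then show "top_weight (V P) K = (if B = {} then [:- 1, 1:] ^ card T else 0) * parity_weight (V P - T - B) \<kappa>"
    unfolding top_weight_def parity_weight_def Let_def ext(1,2) nat_top card_V
    using top_level_nonneg[of "V P - T - B" \<kappa>] fin by simp
qed

lemma sink_set_source_set_no_edges: "E P = {} \<Longrightarrow> sink_set P = V P \<and> source_set P = V P"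
  unfolding sink_set_def source_set_def is_sink_def is_source_def by auto

lemma card_induced_peak_pairs_less:
  assumes "is_orientation P" "(T, B) \<in> peak_pairs P"
  shows "card (V P - T - B) < card (V P)"
  using peak_pairsD(3-6)[OF assms(2)] is_orientation_finite[OF assms(1)]
  by (intro psubset_card_mono) auto

lemma sum_parity_weight:
  assumes "signed_poset P"
  shows "(\<Sum>\<kappa>\<in>gapless_colorings P. parity_weight (V P) \<kappa>) = 1"
  using assms
proof (induction "card (V P)" arbitrary: P rule: less_induct)
  case less
  have orient: "is_orientation P"
    using less.prems unfolding signed_poset_def by simp
  have peeled: "(\<Sum>\<kappa>\<in>gapless_colorings (induced P (V P - T - B)).
      parity_weight (V P) (extend_coloring T B (top_level (V P - T - B) \<kappa> + 1) \<kappa>)) =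
      - ((- 1) ^ (card T + card B))" if TB: "(T, B) \<in> peak_pairs P" for T B
  proof -
    have "(\<Sum>\<kappa>\<in>gapless_colorings (induced P (V P - T - B)). parity_weight (V P - T - B) \<kappa>) = 1"
      using less.hyps[of "induced P (V P - T - B)"] card_induced_peak_pairs_less[OF orient TB]
        signed_poset_induced[OF less.prems, of "V P - T - B"] by auto
    then show ?thesis
      by (simp add: weights_extend_coloring[OF orient TB] sum_negf sum_distrib_left[symmetric])
  qed
  have "(\<Sum>\<kappa>\<in>gapless_colorings P. parity_weight (V P) \<kappa>) =
      (if E P = {} then (- 1) ^ card (V P) else 0) -
      ((if sink_set P = source_set P then (- 1) ^ card (sink_set P) else 0) - 1)"
    unfolding sum_gapless_colorings_peel[OF orient] sum_peak_pairs_alternating[OF orient, symmetric]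
    using peeled by (simp add: parity_weight_def case_prod_beta sum_negf cong: sum.cong)
  also have "\<dots> = 1"
    using sink_set_ne_source_set[OF less.prems] sink_set_source_set_no_edges[of P] by auto
  finally show ?case .
qed

lemma sum_top_weight:
  assumes "signed_poset P"
  shows "(\<Sum>\<kappa>\<in>gapless_colorings P. top_weight (V P) \<kappa>) = [:0, 1:] ^ card (sink_set P) - 1"
proof -
  have orient: "is_orientation P"
    using assms unfolding signed_poset_def by simp
  have peeled: "(\<Sum>\<kappa>\<in>gapless_colorings (induced P (V P - T - B)).
      top_weight (V P) (extend_coloring T B (top_level (V P - T - B) \<kappa> + 1) \<kappa>)) =
      (if B = {} then [:- 1, 1:] ^ card T else 0)" if TB: "(T, B) \<in> peak_pairs P" for T B
  proof -
    have "(\<Sum>\<kappa>\<in>gapless_colorings (induced P (V P - T - B)). parity_weight (V P - T - B) \<kappa>) = 1"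
      using sum_parity_weight[of "induced P (V P - T - B)"] signed_poset_induced[OF assms, of "V P - T - B"]
      by auto
    then show ?thesis
      by (simp add: weights_extend_coloring[OF orient TB] sum_distrib_left[symmetric])
  qed
  have "(\<Sum>\<kappa>\<in>gapless_colorings P. top_weight (V P) \<kappa>) =
      (\<Sum>(T, B)\<in>peak_pairs P. if B = {} then [:- 1, 1:] ^ card T else 0)"
    unfolding sum_gapless_colorings_peel[OF orient]
    using peeled by (simp add: top_weight_def case_prod_beta cong: sum.cong)
  also have "\<dots> = (\<Sum>TB\<in>{TB \<in> peak_pairs P. snd TB = {}}. [:- 1, 1:] ^ card (fst TB))"
    by (simp add: sum.inter_filter[symmetric] finite_peak_pairs[OF orient] case_prod_beta if_distrib)
  also have "\<dots> = (\<Sum>T\<in>Pow (sink_set P) - {{}}. [:- 1, 1:] ^ card T)"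
    by (rule sum.reindex_bij_witness[where j = fst and i = "\<lambda>T. (T, {})"])
       (auto simp: peak_pairs_def)
  also have "\<dots> = (\<Sum>T\<in>Pow (sink_set P). [:- 1, 1:] ^ card T) - 1"
    using sum.remove[of "Pow (sink_set P)" "{}" "\<lambda>T. [:- 1, 1:] ^ card T"] sink_set_finite[OF orient]
    by (metis Pow_bottom add_diff_cancel_left' card.empty finite_Pow_iff power_0)
  also have "\<dots> = [:0, 1:] ^ card (sink_set P) - 1"
    by (simp add: sum_power_card_Pow sink_set_finite[OF orient] one_pCons)
  finally show ?thesis .
qed

section \<open>The functional on power series\<close>

definition colors :: "nat set \<Rightarrow> (nat \<Rightarrow> int) \<Rightarrow> int multiset" where
  "colors W \<kappa> = image_mset \<kappa> (mset_set W)"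

definition mtop_level :: "int multiset \<Rightarrow> int" where
  "mtop_level m = Max (insert 0 (abs ` set_mset m))"

definition mgapless :: "int multiset \<Rightarrow> bool" where
  "mgapless m \<longleftrightarrow> (\<forall>j. 1 \<le> j \<and> j \<le> mtop_level m \<longrightarrow> j \<in># m \<or> - j \<in># m)"

definition monomial_weight :: "int multiset \<Rightarrow> rat poly" where
  "monomial_weight m =
     (let N = mtop_level m; c = count m N
      in if mgapless m then (- 1) ^ (nat N + size m) +
           (if 1 \<le> N \<and> - N \<notin># m then [:- 1, 1:] ^ c * (- 1) ^ (nat N - 1 + (size m - c)) else 0)
         else 0)"

lemma colors_simps:
  assumes "finite W"
  shows "set_mset (colors W \<kappa>) = \<kappa> ` W" "size (colors W \<kappa>) = card W"
    "count (colors W \<kappa>) j = card {v \<in> W. \<kappa> v = j}"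
  using assms unfolding colors_def by (simp_all add: count_image_mset' conj_commute eq_commute)

lemma mtop_level_colors: "finite W \<Longrightarrow> mtop_level (colors W \<kappa>) = top_level W \<kappa>"
  unfolding mtop_level_def top_level_def by (simp add: colors_simps image_image)

lemma mgapless_colors:
  assumes "finite W"
  shows "mgapless (colors W \<kappa>) \<longleftrightarrow> gapless W \<kappa>"
proof -
  have "j \<in> \<kappa> ` W \<or> - j \<in> \<kappa> ` W \<longleftrightarrow> (\<exists>v\<in>W. \<bar>\<kappa> v\<bar> = j)" if "1 \<le> j" for j
  proof
    assume "\<exists>v\<in>W. \<bar>\<kappa> v\<bar> = j"
    then obtain v where "v \<in> W" "\<bar>\<kappa> v\<bar> = j"
      by blast
    then show "j \<in> \<kappa> ` W \<or> - j \<in> \<kappa> ` W"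
      by (cases "0 \<le> \<kappa> v") (auto intro: rev_image_eqI)
  qed (use that in force)
  then show ?thesis
    unfolding mgapless_def gapless_def by (simp add: mtop_level_colors colors_simps assms)
qed

lemma monomial_weight_colors:
  assumes "finite W"
  shows "monomial_weight (colors W \<kappa>) = (if gapless W \<kappa> then parity_weight W \<kappa> + top_weight W \<kappa> else 0)"
proof -
  have "- top_level W \<kappa> \<notin># colors W \<kappa> \<longleftrightarrow> - top_level W \<kappa> \<notin> \<kappa> ` W"
    using colors_simps(1)[OF assms, of \<kappa>] by simp
  also have "\<dots> \<longleftrightarrow> (\<forall>v\<in>W. \<kappa> v \<noteq> - top_level W \<kappa>)"
    by (blast intro: sym)
  finally have "- top_level W \<kappa> \<notin># colors W \<kappa> \<longleftrightarrow> (\<forall>v\<in>W. \<kappa> v \<noteq> - top_level W \<kappa>)" .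
  then show ?thesis
    unfolding monomial_weight_def parity_weight_def top_weight_def Let_def
    by (simp add: mtop_level_colors mgapless_colors colors_simps assms)
qed

definition bounded_monomials :: "nat \<Rightarrow> int multiset set" where
  "bounded_monomials D = {m. set_mset m \<subseteq> {- int D..int D} \<and> size m \<le> D}"

lemma finite_bounded_monomials: "finite (bounded_monomials D)"
proof (rule finite_subset)
  show "bounded_monomials D \<subseteq> (\<Union>n\<in>{..D}. multisets_of_size {- int D..int D} n)"
    unfolding bounded_monomials_def multisets_of_size_def by auto
qed auto

text \<open>Only gapless monomials have nonzero weight, and those of a poset with at most \<open>D\<close> vertices
  have degree at most \<open>D\<close> in the variables \<open>x\<^sub>i\<close> with \<open>\<bar>i\<bar> \<le> D\<close>.  Truncating the sum there
  makes it finite without changing its value on such \<open>Y\<^sub>P\<close>.\<close>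

definition phi_bounded :: "nat \<Rightarrow> fps_Z \<Rightarrow> rat poly" where
  "phi_bounded D f = (\<Sum>m\<in>bounded_monomials D. smult (f m) (monomial_weight m))"

lemma colors_gapless_coloring_bounded:
  assumes "is_orientation P" "\<kappa> \<in> gapless_colorings P" "card (V P) \<le> D"
  shows "colors (V P) \<kappa> \<in> bounded_monomials D"
proof -
  have "\<bar>\<kappa> v\<bar> \<le> int D" if "v \<in> V P" for v
    using abs_le_top_level[OF is_orientation_finite[OF assms(1)] that, of \<kappa>] assms(2,3)
      top_level_le_card[OF is_orientation_finite[OF assms(1)], of \<kappa>]
    unfolding gapless_colorings_def by simp
  then show ?thesis
    using assms(3) unfolding bounded_monomials_def
    by (force simp: colors_simps is_orientation_finite[OF assms(1)] abs_le_iff)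
qed

lemma phi_bounded_Y:
  assumes sp: "signed_poset P" and D: "card (V P) \<le> D"
  shows "phi_bounded D (Y P) = [:0, 1:] ^ sinks P"
proof -
  have orient: "is_orientation P"
    using sp unfolding signed_poset_def by simp
  have fin: "finite (V P)"
    using orient by (rule is_orientation_finite)
  define C where "C = {\<kappa> \<in> V P \<rightarrow>\<^sub>E UNIV. proper_col P \<kappa> \<and> preserves P \<kappa>}"
  define S where "S = {\<kappa> \<in> C. colors (V P) \<kappa> \<in> bounded_monomials D}"
  have "S \<subseteq> V P \<rightarrow>\<^sub>E {- int D..int D}"
    unfolding S_def C_def bounded_monomials_def by (auto simp: colors_simps fin PiE_iff extensional_def)
  then have fin_S: "finite S"
    by (rule finite_subset) (simp add: finite_PiE fin)
  have "phi_bounded D (Y P) =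
      (\<Sum>m\<in>bounded_monomials D. \<Sum>\<kappa>\<in>{\<kappa> \<in> S. colors (V P) \<kappa> = m}. monomial_weight (colors (V P) \<kappa>))"
    unfolding phi_bounded_def
  proof (rule sum.cong[OF refl])
    fix m assume "m \<in> bounded_monomials D"
    then have "{\<kappa> \<in> S. colors (V P) \<kappa> = m} = {\<kappa> \<in> C. colors (V P) \<kappa> = m}"
      unfolding S_def by auto
    then show "smult (Y P m) (monomial_weight m) =
        (\<Sum>\<kappa>\<in>{\<kappa> \<in> S. colors (V P) \<kappa> = m}. monomial_weight (colors (V P) \<kappa>))"
      unfolding Y_def C_def colors_def by (simp add: of_nat_mult_conv_smult[symmetric] conj_assoc)
  qed
  also have "\<dots> = (\<Sum>\<kappa>\<in>S. monomial_weight (colors (V P) \<kappa>))"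
    by (rule sum.group[OF fin_S finite_bounded_monomials]) (auto simp: S_def)
  also have "\<dots> = (\<Sum>\<kappa>\<in>gapless_colorings P. monomial_weight (colors (V P) \<kappa>))"
  proof (rule sum.mono_neutral_right[OF fin_S])
    show "gapless_colorings P \<subseteq> S"
      using colors_gapless_coloring_bounded[OF orient _ D] unfolding S_def C_def gapless_colorings_def by auto
    show "\<forall>\<kappa>\<in>S - gapless_colorings P. monomial_weight (colors (V P) \<kappa>) = 0"
      unfolding S_def C_def gapless_colorings_def by (auto simp: monomial_weight_colors fin)
  qed
  also have "\<dots> = (\<Sum>\<kappa>\<in>gapless_colorings P. parity_weight (V P) \<kappa> + top_weight (V P) \<kappa>)"
    by (rule sum.cong) (auto simp: monomial_weight_colors fin gapless_colorings_def)
  also have "\<dots> = [:0, 1:] ^ sinks P"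
    by (simp add: sum.distrib sum_parity_weight[OF sp] sum_top_weight[OF sp] sinks_def sink_set_def)
  finally show ?thesis .
qed

lemma phi_bounded_linear_combination:
  "phi_bounded D (\<lambda>m. \<Sum>(c, P)\<leftarrow>cs. c * Y P m) = (\<Sum>(c, P)\<leftarrow>cs. smult c (phi_bounded D (Y P)))"
proof (induction cs)
  case (Cons cP cs)
  then show ?case
    by (cases cP) (simp add: phi_bounded_def smult_add_left sum.distrib smult_sum_right)
qed (simp add: phi_bounded_def)

lemma phi_comb_eq_phi_bounded:
  assumes "represents cs f" "\<And>c P. (c, P) \<in> set cs \<Longrightarrow> card (V P) \<le> D"
  shows "phi_comb cs = phi_bounded D f"
proof -
  have "f = (\<lambda>m. \<Sum>(c, P)\<leftarrow>cs. c * Y P m)"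
    using assms(1) unfolding represents_def by auto
  then have "phi_bounded D f = (\<Sum>(c, P)\<leftarrow>cs. smult c (phi_bounded D (Y P)))"
    by (simp add: phi_bounded_linear_combination)
  also have "\<dots> = (\<Sum>(c, P)\<leftarrow>cs. monom c (sinks P))"
    using assms phi_bounded_Y unfolding represents_def
    by (intro arg_cong[where f = sum_list] map_cong) (auto simp: monom_altdef)
  finally show ?thesis
    unfolding phi_comb_def ..
qed

lemma p_ab_zero:
  assumes "1 \<le> a"
  shows "p_ab a 0 m = (if m \<in> range (replicate_mset a) then 1 else 0)"
proof (cases "m \<in> range (replicate_mset a)")
  case True
  then obtain i where "m = replicate_mset a i"
    by blast
  then have "{j. replicate_mset a j + replicate_mset 0 (- j) = m} = {i}"
    using assms by (auto simp: replicate_mset_eq_iff)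
  then show ?thesis
    using True unfolding p_ab_def by simp
next
  case False
  then have "{j. replicate_mset a j + replicate_mset 0 (- j) = m} = {}"
    by auto
  then show ?thesis
    using False unfolding p_ab_def by simp
qed

lemma monomial_weight_replicate_mset:
  assumes "1 \<le> a"
  shows "monomial_weight (replicate_mset a i) =
    (if i = 0 then (- 1) ^ a else if i = 1 then [:- 1, 1:] ^ a - (- 1) ^ a
     else if i = - 1 then - ((- 1) ^ a) else 0)"
proof -
  have set: "set_mset (replicate_mset a i) = {i}"
    using assms by simp
  then have top: "mtop_level (replicate_mset a i) = \<bar>i\<bar>"
    unfolding mtop_level_def by simp
  have gapless: "mgapless (replicate_mset a i) \<longleftrightarrow> \<bar>i\<bar> \<le> 1"
  proof
    assume "mgapless (replicate_mset a i)"
    then have "1 \<le> \<bar>i\<bar> \<Longrightarrow> i = 1 \<or> i = - 1"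
      unfolding mgapless_def top set_mset_replicate_mset_subset using assms by auto
    then show "\<bar>i\<bar> \<le> 1"
      by linarith
  qed (use assms in \<open>auto simp: mgapless_def top abs_if\<close>)
  have "monomial_weight (replicate_mset a i) = (if \<bar>i\<bar> \<le> 1 then (- 1) ^ (nat \<bar>i\<bar> + a) +
      (if 1 \<le> \<bar>i\<bar> \<and> - \<bar>i\<bar> \<notin># replicate_mset a i
       then [:- 1, 1:] ^ count (replicate_mset a i) \<bar>i\<bar> *
         (- 1) ^ (nat \<bar>i\<bar> - 1 + (a - count (replicate_mset a i) \<bar>i\<bar>)) else 0) else 0)"
    unfolding monomial_weight_def Let_def top gapless by simp
  then show ?thesis
    using assms by (auto simp: abs_if power_add)
qed

lemma phi_bounded_p_ab:
  assumes a: "1 \<le> a" "a \<le> D"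
  shows "phi_bounded D (p_ab a 0) = [:- 1, 1:] ^ a - [:(- 1) ^ a:]"
proof -
  have inj: "inj (replicate_mset a)"
    using a(1) by (auto intro: injI simp: replicate_mset_eq_iff)
  have monomials: "bounded_monomials D \<inter> range (replicate_mset a) = replicate_mset a ` {- int D..int D}"
    using a unfolding bounded_monomials_def by auto
  have "phi_bounded D (p_ab a 0) =
      (\<Sum>m\<in>bounded_monomials D. if m \<in> range (replicate_mset a) then monomial_weight m else 0)"
    unfolding phi_bounded_def p_ab_zero[OF a(1)] by (intro sum.cong) auto
  also have "\<dots> = (\<Sum>m\<in>replicate_mset a ` {- int D..int D}. monomial_weight m)"
    unfolding monomials[symmetric] by (rule sum.inter_restrict[symmetric]) (rule finite_bounded_monomials)
  also have "\<dots> = (\<Sum>i\<in>{- int D..int D}. monomial_weight (replicate_mset a i))"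
    by (rule sum.reindex[OF inj_on_subset[OF inj], unfolded comp_def]) simp
  also have "\<dots> = (\<Sum>i\<in>{- 1, 0, 1}. monomial_weight (replicate_mset a i))"
    using a by (intro sum.mono_neutral_right) (auto simp: monomial_weight_replicate_mset)
  also have "\<dots> = [:- 1, 1:] ^ a - (- 1) ^ a"
    using a(1) by (simp add: monomial_weight_replicate_mset)
  also have "(- 1 :: rat poly) ^ a = [:(- 1) ^ a:]"
    by (simp add: poly_const_pow[symmetric] one_pCons)
  finally show ?thesis .
qed

section \<open>Representing \<open>p_ab a 0\<close> by path posets\<close>

datatype link = Unlinked | Rise | Fall

lemma UNIV_link: "(UNIV :: link set) = {Unlinked, Rise, Fall}"
  using link.exhaust by auto

definition link_holds :: "link \<Rightarrow> int \<Rightarrow> int \<Rightarrow> bool" where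
  "link_holds l x y = (case l of Unlinked \<Rightarrow> True | Rise \<Rightarrow> x < y | Fall \<Rightarrow> y < x)"

definition link_factor :: "link \<Rightarrow> int \<Rightarrow> int \<Rightarrow> rat" where
  "link_factor l x y = (if l = Unlinked then 1 else - 1) * of_bool (link_holds l x y)"

lemma sum_link_factor: "(\<Sum>l\<in>UNIV. link_factor l x y) = of_bool (x = y)"
  unfolding UNIV_link link_factor_def link_holds_def by (cases x y rule: linorder_cases) simp_all

text \<open>The path \<open>0 - 1 - \<dots> - (a - 1)\<close> with positive edges \<open>i = {i, i + 1}\<close>: edge \<open>i\<close> is
  present unless \<open>ls i = Unlinked\<close>, and oriented so that preserving colorings increase
  along it if \<open>ls i = Rise\<close> and decrease if \<open>ls i = Fall\<close>.\<close>

definition path_poset :: "nat \<Rightarrow> (nat \<Rightarrow> link) \<Rightarrow> sposet" where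
  "path_poset a ls = \<lparr>V = {..<a}, E = {i \<in> {..<a - 1}. ls i \<noteq> Unlinked}, ends = (\<lambda>i. (i, Suc i)),
     sgn = (\<lambda>_. True), ori = (\<lambda>i. (ls i = Fall, ls i = Rise))\<rparr>"

lemma path_poset_simps [simp]:
  "V (path_poset a ls) = {..<a}" "E (path_poset a ls) = {i \<in> {..<a - 1}. ls i \<noteq> Unlinked}"
  "ends (path_poset a ls) = (\<lambda>i. (i, Suc i))" "sgn (path_poset a ls) = (\<lambda>_. True)"
  "ori (path_poset a ls) = (\<lambda>i. (ls i = Fall, ls i = Rise))"
  unfolding path_poset_def by simp_all

lemma signed_poset_path_poset: "signed_poset (path_poset a ls)"
  unfolding signed_poset_def
proof (intro conjI notI)
  show "is_orientation (path_poset a ls)"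
    unfolding is_orientation_def by auto (metis link.exhaust)
  assume "\<exists>n vs es. is_cycle (path_poset a ls) n vs es"
  then obtain n vs es where cycle: "is_cycle (path_poset a ls) n vs es"
    by blast
  let ?W = "vs ` {..<n}" and ?F = "es ` {..<n}"
  have n: "1 \<le> n" "vs n = vs 0"
    using cycle unfolding is_cycle_def by auto
  \<comment> \<open>at the largest vertex \<open>w\<close> of the cycle, only the edge \<open>w - 1\<close> can carry an arrow\<close>
  define w where "w = Max ?W"
  have ends_in_W: "e \<in> ?W \<and> Suc e \<in> ?W" if e: "e \<in> ?F" for e
  proof -
    obtain l where l: "l < n" "e = es l"
      using e by blast
    have "vs (Suc l) \<in> ?W"
      using l(1) n by (cases "Suc l = n") (auto intro: image_eqI[of _ _ 0])
    then show ?thesis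
      using cycle l unfolding is_cycle_def by auto
  qed
  have arrow_at_w: "Suc e = w \<and> (arrow_in (path_poset a ls) e w \<longleftrightarrow> ls e = Rise) \<and>
      (arrow_out (path_poset a ls) e w \<longleftrightarrow> ls e \<noteq> Rise)"
    if "e \<in> ?F" "arrow_in (path_poset a ls) e w \<or> arrow_out (path_poset a ls) e w" for e
  proof -
    have "Suc e \<le> w"
      unfolding w_def using ends_in_W[OF that(1)] by (intro Max_ge) auto
    then show ?thesis
      using that(2) unfolding arrow_in_def arrow_out_def by auto
  qed
  have "w \<in> ?W"
    unfolding w_def using n(1) by (intro Max_in) (auto simp: lessThan_empty_iff)
  then obtain e1 e2 where "e1 \<in> ?F" "arrow_in (path_poset a ls) e1 w"
    "e2 \<in> ?F" "arrow_out (path_poset a ls) e2 w"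
    using cycle unfolding is_cycle_def by blast
  then show False
    using arrow_at_w[of e1] arrow_at_w[of e2] by auto
qed

lemma finite_colorings_with_colors:
  assumes "finite A"
  shows "finite {\<kappa> \<in> A \<rightarrow>\<^sub>E UNIV. image_mset \<kappa> (mset_set A) = m}"
  by (rule finite_subset[of _ "A \<rightarrow>\<^sub>E set_mset m"]) (auto simp: PiE_iff extensional_def finite_PiE assms)

lemma signed_Y_path_poset:
  "(- 1) ^ card (E (path_poset a ls)) * Y (path_poset a ls) m =
     (\<Sum>\<kappa>\<in>{\<kappa> \<in> {..<a} \<rightarrow>\<^sub>E UNIV. image_mset \<kappa> (mset_set {..<a}) = m}.
        \<Prod>i<a - 1. link_factor (ls i) (\<kappa> i) (\<kappa> (Suc i)))"
proof -
  let ?A = "{\<kappa> \<in> {..<a} \<rightarrow>\<^sub>E UNIV. image_mset \<kappa> (mset_set {..<a}) = m}"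
  have ok: "proper_col (path_poset a ls) \<kappa> \<and> preserves (path_poset a ls) \<kappa> \<longleftrightarrow>
      (\<forall>i<a - 1. link_holds (ls i) (\<kappa> i) (\<kappa> (Suc i)))" for \<kappa>
    unfolding proper_col_def preserves_def link_holds_def sgnval_def
    by (auto split: link.splits) (metis link.exhaust not_less_iff_gr_or_eq)+
  have fin: "finite ?A"
    by (rule finite_colorings_with_colors) simp
  have "{\<kappa> \<in> V (path_poset a ls) \<rightarrow>\<^sub>E UNIV. proper_col (path_poset a ls) \<kappa> \<and> preserves (path_poset a ls) \<kappa> \<and>
        image_mset \<kappa> (mset_set (V (path_poset a ls))) = m} =
      ?A \<inter> {\<kappa>. \<forall>i<a - 1. link_holds (ls i) (\<kappa> i) (\<kappa> (Suc i))}"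
    using ok by auto
  then have "Y (path_poset a ls) m = (\<Sum>\<kappa>\<in>?A. of_bool (\<forall>i<a - 1. link_holds (ls i) (\<kappa> i) (\<kappa> (Suc i))))"
    unfolding Y_def using fin by simp
  then show ?thesis
    by (simp add: sum_distrib_left link_factor_def prod.distrib prod_sign prod_of_bool lessThan_def)
qed

lemma card_constant_colorings:
  assumes "1 \<le> a"
  shows "card {\<kappa> \<in> {..<a} \<rightarrow>\<^sub>E UNIV. image_mset \<kappa> (mset_set {..<a}) = m \<and> (\<forall>i<a - 1. \<kappa> i = \<kappa> (Suc i))} =
    card {i :: int. replicate_mset a i = m}"
proof -
  let ?const = "\<lambda>i :: int. restrict (\<lambda>_. i) {..<a}"
  have "\<kappa> v = \<kappa> 0" if "\<forall>i<a - 1. \<kappa> i = \<kappa> (Suc i)" "v < a" for \<kappa> :: "nat \<Rightarrow> int" and v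
    using that(2) by (induction v) (use that(1) in auto)
  then have const: "\<kappa> = ?const (\<kappa> 0)" if "\<kappa> \<in> {..<a} \<rightarrow>\<^sub>E UNIV" "\<forall>i<a - 1. \<kappa> i = \<kappa> (Suc i)" for \<kappa>
    using that by (auto simp: PiE_iff extensional_def)
  have "{\<kappa> \<in> {..<a} \<rightarrow>\<^sub>E UNIV. image_mset \<kappa> (mset_set {..<a}) = m \<and> (\<forall>i<a - 1. \<kappa> i = \<kappa> (Suc i))} =
      ?const ` {i. replicate_mset a i = m}"
  proof (intro equalityI subsetI)
    fix \<kappa> assume "\<kappa> \<in> {\<kappa> \<in> {..<a} \<rightarrow>\<^sub>E UNIV. image_mset \<kappa> (mset_set {..<a}) = m \<and> (\<forall>i<a - 1. \<kappa> i = \<kappa> (Suc i))}"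
    then have \<kappa>: "\<kappa> \<in> {..<a} \<rightarrow>\<^sub>E UNIV" "image_mset \<kappa> (mset_set {..<a}) = m" "\<forall>i<a - 1. \<kappa> i = \<kappa> (Suc i)"
      by auto
    obtain i where i: "\<kappa> = ?const i"
      using const[OF \<kappa>(1,3)] by blast
    then have "replicate_mset a i = m"
      using \<kappa>(2) by (simp add: image_mset_restrict_const)
    then show "\<kappa> \<in> ?const ` {i. replicate_mset a i = m}"
      using i by blast
  qed (auto simp: image_mset_restrict_const split: if_splits)
  moreover have "inj ?const"
    using assms by (intro injI) (metis lessThan_iff less_le_trans restrict_apply' zero_less_one)
  ultimately show ?thesis
    by (simp add: card_image inj_on_subset)
qed

lemma represents_p_ab_zero:
  assumes "1 \<le> a"
  shows "\<exists>cs. represents cs (p_ab a 0)"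
proof -
  define L where "L = {..<a - 1} \<rightarrow>\<^sub>E (UNIV :: link set)"
  have "finite L"
    unfolding L_def by (simp add: finite_PiE UNIV_link)
  then obtain xs where xs: "set xs = L" "distinct xs"
    using finite_distinct_list by blast
  define cs where "cs = map (\<lambda>ls. ((- 1 :: rat) ^ card (E (path_poset a ls)), path_poset a ls)) xs"
  have "represents cs (p_ab a 0)"
    unfolding represents_def
  proof (intro conjI allI)
    show "\<forall>(c, P)\<in>set cs. signed_poset P"
      unfolding cs_def using signed_poset_path_poset by auto
    fix m :: "int multiset"
    let ?A = "{\<kappa> \<in> {..<a} \<rightarrow>\<^sub>E UNIV. image_mset \<kappa> (mset_set {..<a}) = m}"
    have "(\<Sum>(c, P)\<leftarrow>cs. c * Y P m) = (\<Sum>ls\<in>L. (- 1) ^ card (E (path_poset a ls)) * Y (path_poset a ls) m)"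
      unfolding cs_def using xs by (simp add: sum_list_distinct_conv_sum_set comp_def)
    also have "\<dots> = (\<Sum>ls\<in>L. \<Sum>\<kappa>\<in>?A. \<Prod>i<a - 1. link_factor (ls i) (\<kappa> i) (\<kappa> (Suc i)))"
      by (rule sum.cong[OF refl], rule signed_Y_path_poset)
    also have "\<dots> = (\<Sum>\<kappa>\<in>?A. \<Sum>ls\<in>L. \<Prod>i<a - 1. link_factor (ls i) (\<kappa> i) (\<kappa> (Suc i)))"
      by (rule sum.swap)
    also have "\<dots> = (\<Sum>\<kappa>\<in>?A. \<Prod>i<a - 1. \<Sum>l\<in>UNIV. link_factor l (\<kappa> i) (\<kappa> (Suc i)))"
      unfolding L_def by (intro sum.cong refl prod_sum_PiE[symmetric]) (simp_all add: UNIV_link)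
    also have "\<dots> = (\<Sum>\<kappa>\<in>?A. of_bool (\<forall>i<a - 1. \<kappa> i = \<kappa> (Suc i)))"
      by (simp add: sum_link_factor prod_of_bool lessThan_def)
    also have "\<dots> = of_nat (card {\<kappa> \<in> ?A. \<forall>i<a - 1. \<kappa> i = \<kappa> (Suc i)})"
      using finite_colorings_with_colors[of "{..<a}" m] by (simp add: Int_def)
    also have "card {\<kappa> \<in> ?A. \<forall>i<a - 1. \<kappa> i = \<kappa> (Suc i)} = card {i. replicate_mset a i = m}"
      using card_constant_colorings[OF assms] by (simp add: conj_assoc)
    finally show "(\<Sum>(c, P)\<leftarrow>cs. c * Y P m) = p_ab a 0 m"
      unfolding p_ab_def by simp
  qed
  then show ?thesis
    by blast
qed

theorem theorem6p5:
  fixes a :: nat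
  assumes "a \<ge> 1"
  shows "(\<exists>cs. represents cs (p_ab a 0)) \<and>
         (\<forall>cs. represents cs (p_ab a 0) \<longrightarrow> phi_comb cs = [:-1, 1:] ^ a - [:(-1) ^ a:])"
proof (intro conjI allI impI)
  show "\<exists>cs. represents cs (p_ab a 0)"
    using represents_p_ab_zero[OF assms] .
  fix cs assume cs: "represents cs (p_ab a 0)"
  define D where "D = a + (\<Sum>(c, P)\<leftarrow>cs. card (V P))"
  have "card (V P) \<le> D" if "(c, P) \<in> set cs" for c P
    using member_le_sum_list[of "card (V P)" "map (\<lambda>(c, P). card (V P)) cs"] that
    unfolding D_def by force
  then have "phi_comb cs = phi_bounded D (p_ab a 0)"
    by (rule phi_comb_eq_phi_bounded[OF cs])
  also have "\<dots> = [:- 1, 1:] ^ a - [:(- 1) ^ a:]"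
    using assms by (intro phi_bounded_p_ab) (auto simp: D_def)
  finally show "phi_comb cs = [:-1, 1:] ^ a - [:(-1) ^ a:]"
    by simp
qed

end
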